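(* For every finite set $\Gamma$ of IPL formulas and every IPL formula $\varphi$: $\Gamma \Vdash^{*} \varphi$ if and only if $\Gamma \vdash \varphi$ (i.e., $\varphi$ is derivable from $\Gamma$ in intuitionistic propositional logic).
   Context: Fix a denumerable set $\mathbb{A}$ of atoms. IPL formulas are built from atoms and $\bot$ using $\wedge,\vee,\to$. An atomic rule has the form $(Q_1\triangleright q_1,\dots,Q_n\triangleright q_n)\Rightarrow q$ with $n\ge 0$, $q,q_i\in\mathbb{A}$ and $Q_i$ finite (possibly empty) sets of atoms. A base is a set of atomic rules; $\mathscr{C}\supseteq\mathscr{B}$ means $\mathscr{C}$ extends $\mathscr{B}$. Derivability $\vdash_{\mathscr{B}}$ (between finite sets of atoms and atoms) is the least relation such that $S\cup\{q\}\vdash_{\mathscr{B}} q$, and if $(Q_1\triangleright q_1,\dots,Q_n\triangleright q_n)\Rightarrow q\in\mathscr{B}$ and $S\cup Q_i\vdash_{\mathscr{B}} q_i$ for all $i$, then $S\vdash_{\mathscr{B}} q$. The relation $\Vdash^{*}_{\mathscr{B}}$ is defined inductively by: (At) $\Vdash^{*}_{\mathscr{B}} p$ iff $\emptyset\vdash_{\mathscr{B}} p$; ($\to$) $\Vdash^{*}_{\mathscr{B}}\varphi\to\psi$ iff $\varphi\Vdash^{*}_{\mathscr{B}}\psi$; ($\wedge^*$) $\Vdash^{*}_{\mathscr{B}}\varphi\wedge\psi$ iff for every $\mathscr{C}\supseteq\mathscr{B}$ and every atom $p$, if $\varphi,\psi\Vdash^{*}_{\mathscr{C}} p$ then $\Vdash^{*}_{\mathscr{C}}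 p$; ($\vee$) $\Vdash^{*}_{\mathscr{B}}\varphi\vee\psi$ iff for every $\mathscr{C}\supseteq\mathscr{B}$ and every atom $p$, if $\varphi\Vdash^{*}_{\mathscr{C}} p$ and $\psi\Vdash^{*}_{\mathscr{C}} p$ then $\Vdash^{*}_{\mathscr{C}} p$; ($\bot$) $\Vdash^{*}_{\mathscr{B}}\bot$ iff $\Vdash^{*}_{\mathscr{B}} p$ for every atom $p$; (Inf) for nonempty finite $\Gamma$, $\Gamma\Vdash^{*}_{\mathscr{B}}\varphi$ iff for every $\mathscr{C}\supseteq\mathscr{B}$, if $\Vdash^{*}_{\mathscr{C}}\psi$ for all $\psi\in\Gamma$ then $\Vdash^{*}_{\mathscr{C}}\varphi$ (for empty $\Gamma$, $\Gamma\Vdash^{*}_{\mathscr{B}}\varphi$ means $\Vdash^{*}_{\mathscr{B}}\varphi$). Finally $\Gamma\Vdash^{*}\varphi$ iff $\Gamma\Vdash^{*}_{\mathscr{B}}\varphi$ for every base $\mathscr{B}$. *)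

theory Defs
  imports Main "HOL-Library.FSet"
begin

type_synonym atom = nat

datatype form =
    Atom atom
  | Bot
  | And form form
  | Or form form
  | Imp form form

text \<open>An atomic rule (Q1|>q1, ..., Qn|>qn) => q, with finite atom sets Qi.\<close>
type_synonym rule = "((atom fset \<times> atom) list) \<times> atom"
type_synonym base = "rule set"

inductive derives :: "base \<Rightarrow> atom set \<Rightarrow> atom \<Rightarrow> bool" where
  ref: "q \<in> S \<Longrightarrow> derives B S q"
| app: "(prems, q) \<in> B \<Longrightarrow> (\<forall>(Qi, qi) \<in> set prems. derives B (S \<union> fset Qi) qi)
        \<Longrightarrow> derives B S q"

text \<open>Support |=*_B phi, with clause ->, /\*, \/ unfolding (Inf) for the
  nonempty contexts {phi}, {phi,psi}.\<close>
fun supp :: "base \<Rightarrow> form \<Rightarrow> bool" where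
  "supp B (Atom p) = derives B {} p"
| "supp B Bot = (\<forall>p. derives B {} p)"
| "supp B (Imp \<phi> \<psi>) = (\<forall>C. B \<subseteq> C \<longrightarrow> supp C \<phi> \<longrightarrow> supp C \<psi>)"
| "supp B (And \<phi> \<psi>) =
     (\<forall>C p. B \<subseteq> C \<longrightarrow>
        (\<forall>D. C \<subseteq> D \<longrightarrow> supp D \<phi> \<longrightarrow> supp D \<psi> \<longrightarrow> derives D {} p) \<longrightarrow>
        derives C {} p)"
| "supp B (Or \<phi> \<psi>) =
     (\<forall>C p. B \<subseteq> C \<longrightarrow>
        (\<forall>D. C \<subseteq> D \<longrightarrow> supp D \<phi> \<longrightarrow> derives D {} p) \<longrightarrow>
        (\<forall>D. C \<subseteq> D \<longrightarrow> supp D \<psi> \<longrightarrow> derives D {} p) \<longrightarrow>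
        derives C {} p)"

definition supp_cons :: "base \<Rightarrow> form set \<Rightarrow> form \<Rightarrow> bool" where
  "supp_cons B \<Gamma> \<phi> =
     (if \<Gamma> = {} then supp B \<phi>
      else (\<forall>C. B \<subseteq> C \<longrightarrow> (\<forall>\<psi>\<in>\<Gamma>. supp C \<psi>) \<longrightarrow> supp C \<phi>))"

definition valid :: "form set \<Rightarrow> form \<Rightarrow> bool" where
  "valid \<Gamma> \<phi> = (\<forall>B. supp_cons B \<Gamma> \<phi>)"

inductive ipl :: "form set \<Rightarrow> form \<Rightarrow> bool" where
  ax: "\<phi> \<in> \<Gamma> \<Longrightarrow> ipl \<Gamma> \<phi>"
| botE: "ipl \<Gamma> Bot \<Longrightarrow> ipl \<Gamma> \<phi>"
| andI: "ipl \<Gamma> \<phi> \<Longrightarrow> ipl \<Gamma> \<psi> \<Longrightarrow> ipl \<Gamma> (And \<phi> \<psi>)"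
| andE1: "ipl \<Gamma> (And \<phi> \<psi>) \<Longrightarrow> ipl \<Gamma> \<phi>"
| andE2: "ipl \<Gamma> (And \<phi> \<psi>) \<Longrightarrow> ipl \<Gamma> \<psi>"
| orI1: "ipl \<Gamma> \<phi> \<Longrightarrow> ipl \<Gamma> (Or \<phi> \<psi>)"
| orI2: "ipl \<Gamma> \<psi> \<Longrightarrow> ipl \<Gamma> (Or \<phi> \<psi>)"
| orE: "ipl \<Gamma> (Or \<phi> \<psi>) \<Longrightarrow> ipl (insert \<phi> \<Gamma>) \<chi> \<Longrightarrow> ipl (insert \<psi> \<Gamma>) \<chi>
        \<Longrightarrow> ipl \<Gamma> \<chi>"
| impI: "ipl (insert \<phi> \<Gamma>) \<psi> \<Longrightarrow> ipl \<Gamma> (Imp \<phi> \<psi>)"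
| impE: "ipl \<Gamma> (Imp \<phi> \<psi>) \<Longrightarrow> ipl \<Gamma> \<phi> \<Longrightarrow> ipl \<Gamma> \<psi>"

end

theory Submission
  imports Defs "HOL-Library.Countable"
begin

text \<open>Soundness: the clauses for \<open>\<and>\<close> and \<open>\<or>\<close> only allow eliminating into atoms,
  but by induction on the conclusion this elimination extends to every formula, which
  validates the elimination rules of NJ; the remaining rules are immediate.

  Completeness: fix \<open>M\<close> above all atoms of \<open>\<Gamma>\<close> and \<open>\<phi>\<close>, and name every compound
  formula by a fresh atom \<open>\<ge> M\<close>. A base made of the NJ rules written as atomic rules
  on these names has the property that, in each of its extensions, a formula is supported
  iff its name is derivable. Extending it by the names of \<open>\<Gamma>\<close> as axioms, validity
  yields a derivation of the name of \<open>\<phi>\<close> from the names of \<open>\<Gamma>\<close>, and reading every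
  atomic rule back as the NJ rule it encodes gives \<open>\<Gamma> \<turnstile> \<phi>\<close>.\<close>

lemma derives_mono:
  assumes "derives B S p" and "B \<subseteq> B'" and "S \<subseteq> S'"
  shows "derives B' S' p"
  using assms
proof (induction arbitrary: B' S' rule: derives.induct)
  case (ref q S B)
  then show ?case by (blast intro: derives.ref)
next
  case (app prems q B S)
  show ?case
  proof (rule derives.app)
    show "(prems, q) \<in> B'" using app.hyps app.prems by blast
    show "\<forall>(Qi, qi)\<in>set prems. derives B' (S' \<union> fset Qi) qi"
    proof clarify
      fix Qi qi assume "(Qi, qi) \<in> set prems"
      moreover have "S \<union> fset Qi \<subseteq> S' \<union> fset Qi" using app.prems by blast
      ultimately show "derives B' (S' \<union> fset Qi) qi" using app.IH app.prems(1) by blast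
    qed
  qed
qed

lemma derives_rule:
  assumes "(prems, q) \<in> B" and "\<And>Qi qi. (Qi, qi) \<in> set prems \<Longrightarrow> derives B (S \<union> fset Qi) qi"
  shows "derives B S q"
  using assms by (intro derives.app) auto

lemma derives_axiom: "([], q) \<in> B \<Longrightarrow> derives B S q"
  by (rule derives_rule) auto

lemma derives_discharge_axioms:
  assumes "derives B' S p" and "B' \<subseteq> B \<union> (\<lambda>q. ([], q)) ` A"
  shows "derives B (S \<union> A) p"
  using assms
proof (induction rule: derives.induct)
  case (ref q S B')
  then show ?case by (blast intro: derives.ref)
next
  case (app prems q B' S)
  show ?case
  proof (cases "(prems, q) \<in> B")
    case True
    have prem_derivations: "derives B (S \<union> A \<union> fset Qi) qi" if "(Qi, qi) \<in> set prems" for Qi qi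
      using bspec[OF app.IH that] app.prems by (simp add: Un_ac)
    show ?thesis using True prem_derivations by (rule derives_rule)
  next
    case False
    then show ?thesis using app by (blast intro: derives.ref)
  qed
qed

lemma derives_discharge_axiom: "derives (insert ([], q) B) S p \<Longrightarrow> derives B (insert q S) p"
  using derives_discharge_axioms[of "insert ([], q) B" S p B "{q}"] by auto

lemma supp_mono: "supp B \<phi> \<Longrightarrow> B \<subseteq> C \<Longrightarrow> supp C \<phi>"
proof (induction \<phi> arbitrary: B C)
  case (Atom p)
  then show ?case using derives_mono by auto
next
  case Bot
  then show ?case by (simp, meson derives_mono order_refl)
qed (simp only: supp.simps; meson subset_trans)+

definition atomic_elim :: "base \<Rightarrow> (base \<Rightarrow> bool) \<Rightarrow> bool" where
  "atomic_elim B P \<longleftrightarrow>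
     (\<forall>C p. B \<subseteq> C \<longrightarrow> (\<forall>D. C \<subseteq> D \<longrightarrow> P D \<longrightarrow> derives D {} p) \<longrightarrow> derives C {} p)"

lemma atomic_elimD:
  "atomic_elim B P \<Longrightarrow> B \<subseteq> C \<Longrightarrow> (\<And>D. C \<subseteq> D \<Longrightarrow> P D \<Longrightarrow> derives D {} p) \<Longrightarrow> derives C {} p"
  unfolding atomic_elim_def by blast

lemma atomic_elim_mono: "atomic_elim B P \<Longrightarrow> B \<subseteq> C \<Longrightarrow> atomic_elim C P"
  unfolding atomic_elim_def by (meson subset_trans)

lemma atomic_elim_trans:
  assumes "atomic_elim B P" and "\<And>D. B \<subseteq> D \<Longrightarrow> P D \<Longrightarrow> atomic_elim D Q"
  shows "atomic_elim B Q"
  unfolding atomic_elim_def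
proof (intro allI HOL.impI)
  fix C p assume "B \<subseteq> C" and H: "\<forall>D. C \<subseteq> D \<longrightarrow> Q D \<longrightarrow> derives D {} p"
  show "derives C {} p"
  proof (rule atomic_elimD[OF assms(1) \<open>B \<subseteq> C\<close>])
    fix D assume "C \<subseteq> D" and "P D"
    then have "atomic_elim D Q" using assms(2) \<open>B \<subseteq> C\<close> by blast
    then show "derives D {} p" using H \<open>C \<subseteq> D\<close> by (auto intro: atomic_elimD)
  qed
qed

lemma supp_And_iff: "supp B (And \<phi> \<psi>) \<longleftrightarrow> atomic_elim B (\<lambda>D. supp D \<phi> \<and> supp D \<psi>)"
  unfolding atomic_elim_def supp.simps by blast

lemma supp_Or_iff: "supp B (Or \<phi> \<psi>) \<longleftrightarrow> atomic_elim B (\<lambda>D. supp D \<phi> \<or> supp D \<psi>)"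
  unfolding atomic_elim_def supp.simps imp_disjL imp_conjR all_conj_distrib imp_conjL by simp

lemma supp_Bot_atomic_elim: "supp B Bot \<Longrightarrow> atomic_elim B (\<lambda>_. False)"
  unfolding atomic_elim_def supp.simps by (meson derives_mono order_refl)

text \<open>This makes the elimination rules for \<open>\<bottom>\<close>, \<open>\<and>\<close> and \<open>\<or>\<close> sound.\<close>
lemma supp_by_atomic_elim:
  assumes "atomic_elim B P" and "\<And>C. B \<subseteq> C \<Longrightarrow> P C \<Longrightarrow> supp C \<chi>"
  shows "supp B \<chi>"
  using assms
proof (induction \<chi> arbitrary: B)
  case (Atom p)
  then show ?case by (auto intro: atomic_elimD)
next
  case Bot
  then show ?case by (auto intro: atomic_elimD)
next
  case (And \<chi>1 \<chi>2)
  show ?case unfolding supp_And_iff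
    by (rule atomic_elim_trans[OF And.prems(1)]) (use And.prems(2) supp_And_iff in blast)
next
  case (Or \<chi>1 \<chi>2)
  show ?case unfolding supp_Or_iff
    by (rule atomic_elim_trans[OF Or.prems(1)]) (use Or.prems(2) supp_Or_iff in blast)
next
  case (Imp \<chi>1 \<chi>2)
  show ?case unfolding supp.simps
  proof (intro allI HOL.impI)
    fix C assume "B \<subseteq> C" and "supp C \<chi>1"
    have "atomic_elim C P" using Imp.prems(1) \<open>B \<subseteq> C\<close> by (rule atomic_elim_mono)
    moreover have "supp D \<chi>2" if "C \<subseteq> D" and "P D" for D
    proof -
      have "supp D (Imp \<chi>1 \<chi>2)" using Imp.prems(2) \<open>B \<subseteq> C\<close> that by blast
      moreover have "supp D \<chi>1" using \<open>supp C \<chi>1\<close> \<open>C \<subseteq> D\<close> by (rule supp_mono)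
      ultimately show ?thesis by auto
    qed
    ultimately show "supp C \<chi>2" by (rule Imp.IH(2))
  qed
qed

lemma supp_AndI:
  assumes "supp B \<phi>" and "supp B \<psi>"
  shows "supp B (And \<phi> \<psi>)"
proof -
  have "supp C \<phi> \<and> supp C \<psi>" if "B \<subseteq> C" for C using assms that supp_mono by blast
  then show ?thesis unfolding supp_And_iff atomic_elim_def by blast
qed

lemma supp_OrI1:
  assumes "supp B \<phi>"
  shows "supp B (Or \<phi> \<psi>)"
proof -
  have "supp C \<phi> \<or> supp C \<psi>" if "B \<subseteq> C" for C using assms that supp_mono by blast
  then show ?thesis unfolding supp_Or_iff atomic_elim_def by blast
qed

lemma supp_OrI2:
  assumes "supp B \<psi>"
  shows "supp B (Or \<phi> \<psi>)"
proof -
  have "supp C \<phi> \<or> supp C \<psi>" if "B \<subseteq> C" for C using assms that supp_mono by blast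
  then show ?thesis unfolding supp_Or_iff atomic_elim_def by blast
qed

lemma ipl_sound: "ipl \<Gamma> \<phi> \<Longrightarrow> \<forall>\<psi>\<in>\<Gamma>. supp B \<psi> \<Longrightarrow> supp B \<phi>"
proof (induction arbitrary: B rule: ipl.induct)
  case (botE \<Gamma> \<phi>)
  then show ?case by (blast intro: supp_by_atomic_elim supp_Bot_atomic_elim)
next
  case (andI \<Gamma> \<phi> \<psi>)
  then show ?case by (blast intro: supp_AndI)
next
  case (andE1 \<Gamma> \<phi> \<psi>)
  then have "atomic_elim B (\<lambda>D. supp D \<phi> \<and> supp D \<psi>)" by (simp only: supp_And_iff)
  then show ?case by (rule supp_by_atomic_elim) blast
next
  case (andE2 \<Gamma> \<phi> \<psi>)
  then have "atomic_elim B (\<lambda>D. supp D \<phi> \<and> supp D \<psi>)" by (simp only: supp_And_iff)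
  then show ?case by (rule supp_by_atomic_elim) blast
next
  case (orI1 \<Gamma> \<phi> \<psi>)
  then show ?case by (blast intro: supp_OrI1)
next
  case (orI2 \<Gamma> \<psi> \<phi>)
  then show ?case by (blast intro: supp_OrI2)
next
  case (orE \<Gamma> \<phi> \<psi> \<chi>)
  then have "atomic_elim B (\<lambda>D. supp D \<phi> \<or> supp D \<psi>)" by (simp only: supp_Or_iff)
  then show ?case
  proof (rule supp_by_atomic_elim)
    fix C assume "B \<subseteq> C" and "supp C \<phi> \<or> supp C \<psi>"
    moreover have "\<forall>\<gamma>\<in>\<Gamma>. supp C \<gamma>" using orE.prems \<open>B \<subseteq> C\<close> supp_mono by blast
    ultimately show "supp C \<chi>" using orE.IH(2,3) by blast
  qed
next
  case (impI \<phi> \<Gamma> \<psi>)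
  then show ?case by (simp, meson supp_mono)
next
  case (impE \<Gamma> \<phi> \<psi>)
  then have "supp B (Imp \<phi> \<psi>)" and "supp B \<phi>" by blast+
  then show ?case by auto
qed blast

lemma valid_iff_supp: "valid \<Gamma> \<phi> \<longleftrightarrow> (\<forall>B. (\<forall>\<psi>\<in>\<Gamma>. supp B \<psi>) \<longrightarrow> supp B \<phi>)"
  unfolding valid_def supp_cons_def by auto

instance form :: countable by countable_datatype

fun atoms :: "form \<Rightarrow> atom set" where
  "atoms (Atom p) = {p}"
| "atoms Bot = {}"
| "atoms (And \<phi> \<psi>) = atoms \<phi> \<union> atoms \<psi>"
| "atoms (Or \<phi> \<psi>) = atoms \<phi> \<union> atoms \<psi>"
| "atoms (Imp \<phi> \<psi>) = atoms \<phi> \<union> atoms \<psi>"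

lemma finite_atoms: "finite (atoms \<phi>)"
  by (induction \<phi>) auto

text \<open>An atom names itself and a compound formula is named by an atom \<open>\<ge> M\<close>, so
  the naming is injective on formulas whose atoms lie below \<open>M\<close>.\<close>
definition atom_of :: "nat \<Rightarrow> form \<Rightarrow> atom" where
  "atom_of M \<phi> = (case \<phi> of Atom p \<Rightarrow> p | _ \<Rightarrow> M + to_nat \<phi>)"

definition form_of :: "nat \<Rightarrow> atom \<Rightarrow> form" where
  "form_of M p = (if M \<le> p then from_nat (p - M) else Atom p)"

lemma form_of_atom_of: "atoms \<phi> \<subseteq> {..<M} \<Longrightarrow> form_of M (atom_of M \<phi>) = \<phi>"
  by (cases \<phi>) (auto simp: atom_of_def form_of_def)

inductive_set nd_base :: "nat \<Rightarrow> base" for M where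
  AndI: "atoms (And \<phi> \<psi>) \<subseteq> {..<M} \<Longrightarrow>
    ([({||}, atom_of M \<phi>), ({||}, atom_of M \<psi>)], atom_of M (And \<phi> \<psi>)) \<in> nd_base M"
| AndE1: "atoms (And \<phi> \<psi>) \<subseteq> {..<M} \<Longrightarrow>
    ([({||}, atom_of M (And \<phi> \<psi>))], atom_of M \<phi>) \<in> nd_base M"
| AndE2: "atoms (And \<phi> \<psi>) \<subseteq> {..<M} \<Longrightarrow>
    ([({||}, atom_of M (And \<phi> \<psi>))], atom_of M \<psi>) \<in> nd_base M"
| OrI1: "atoms (Or \<phi> \<psi>) \<subseteq> {..<M} \<Longrightarrow>
    ([({||}, atom_of M \<phi>)], atom_of M (Or \<phi> \<psi>)) \<in> nd_base M"
| OrI2: "atoms (Or \<phi> \<psi>) \<subseteq> {..<M} \<Longrightarrow>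
    ([({||}, atom_of M \<psi>)], atom_of M (Or \<phi> \<psi>)) \<in> nd_base M"
| OrE: "atoms (Or \<phi> \<psi>) \<subseteq> {..<M} \<Longrightarrow>
    ([({||}, atom_of M (Or \<phi> \<psi>)), ({|atom_of M \<phi>|}, r), ({|atom_of M \<psi>|}, r)], r) \<in> nd_base M"
| ImpI: "atoms (Imp \<phi> \<psi>) \<subseteq> {..<M} \<Longrightarrow>
    ([({|atom_of M \<phi>|}, atom_of M \<psi>)], atom_of M (Imp \<phi> \<psi>)) \<in> nd_base M"
| ImpE: "atoms (Imp \<phi> \<psi>) \<subseteq> {..<M} \<Longrightarrow>
    ([({||}, atom_of M (Imp \<phi> \<psi>)), ({||}, atom_of M \<phi>)], atom_of M \<psi>) \<in> nd_base M"
| BotE: "([({||}, atom_of M Bot)], r) \<in> nd_base M"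

definition named_by_atom :: "nat \<Rightarrow> form \<Rightarrow> bool" where
  "named_by_atom M \<phi> \<longleftrightarrow>
     (\<forall>C. nd_base M \<subseteq> C \<longrightarrow> (supp C \<phi> \<longleftrightarrow> derives C {} (atom_of M \<phi>)))"

lemma named_by_atomD:
  "named_by_atom M \<phi> \<Longrightarrow> nd_base M \<subseteq> C \<Longrightarrow> supp C \<phi> \<longleftrightarrow> derives C {} (atom_of M \<phi>)"
  unfolding named_by_atom_def by blast

lemma named_by_atom_Atom: "named_by_atom M (Atom p)"
  by (simp add: named_by_atom_def atom_of_def)

lemma named_by_atom_Bot: "named_by_atom M Bot"
  unfolding named_by_atom_def
proof (intro allI HOL.impI iffI)
  fix C assume C: "nd_base M \<subseteq> C" and d: "derives C {} (atom_of M Bot)"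
  have "derives C {} p" for p
  proof (rule derives_rule)
    show "([({||}, atom_of M Bot)], p) \<in> C" using nd_base.BotE C by blast
  qed (use d in auto)
  then show "supp C Bot" by auto
qed simp

lemma named_by_atom_And:
  assumes "atoms (And \<phi> \<psi>) \<subseteq> {..<M}" and \<phi>: "named_by_atom M \<phi>" and \<psi>: "named_by_atom M \<psi>"
  shows "named_by_atom M (And \<phi> \<psi>)"
  unfolding named_by_atom_def
proof (intro allI HOL.impI iffI)
  fix C assume C: "nd_base M \<subseteq> C" and "supp C (And \<phi> \<psi>)"
  then have "atomic_elim C (\<lambda>D. supp D \<phi> \<and> supp D \<psi>)" by (simp only: supp_And_iff)
  moreover have "derives D {} (atom_of M (And \<phi> \<psi>))"
    if "C \<subseteq> D" and "supp D \<phi> \<and> supp D \<psi>" for D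
  proof (rule derives_rule)
    show "([({||}, atom_of M \<phi>), ({||}, atom_of M \<psi>)], atom_of M (And \<phi> \<psi>)) \<in> D"
      using nd_base.AndI assms(1) C that(1) by blast
  qed (use \<phi> \<psi> C that in \<open>auto simp: named_by_atom_def\<close>)
  ultimately show "derives C {} (atom_of M (And \<phi> \<psi>))"
    unfolding atomic_elim_def by blast
next
  fix C assume C: "nd_base M \<subseteq> C" and d: "derives C {} (atom_of M (And \<phi> \<psi>))"
  have "supp D \<phi> \<and> supp D \<psi>" if "C \<subseteq> D" for D
  proof -
    have "derives D {} (atom_of M (And \<phi> \<psi>))" using derives_mono d that by blast
    moreover have "([({||}, atom_of M (And \<phi> \<psi>))], atom_of M \<phi>) \<in> D"
      and "([({||}, atom_of M (And \<phi> \<psi>))], atom_of M \<psi>) \<in> D"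
      using nd_base.AndE1 nd_base.AndE2 assms(1) C that by blast+
    ultimately have "derives D {} (atom_of M \<phi>)" and "derives D {} (atom_of M \<psi>)"
      by (auto elim!: derives_rule)
    then show ?thesis using \<phi> \<psi> C that by (auto simp: named_by_atom_def)
  qed
  then show "supp C (And \<phi> \<psi>)" by (auto simp: supp_And_iff atomic_elim_def)
qed

lemma named_by_atom_Or:
  assumes "atoms (Or \<phi> \<psi>) \<subseteq> {..<M}" and \<phi>: "named_by_atom M \<phi>" and \<psi>: "named_by_atom M \<psi>"
  shows "named_by_atom M (Or \<phi> \<psi>)"
  unfolding named_by_atom_def
proof (intro allI HOL.impI iffI)
  fix C assume C: "nd_base M \<subseteq> C" and "supp C (Or \<phi> \<psi>)"
  then have "atomic_elim C (\<lambda>D. supp D \<phi> \<or> supp D \<psi>)" by (simp only: supp_Or_iff)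
  moreover have "derives D {} (atom_of M (Or \<phi> \<psi>))"
    if "C \<subseteq> D" and "supp D \<phi> \<or> supp D \<psi>" for D
  proof -
    have "([({||}, atom_of M \<phi>)], atom_of M (Or \<phi> \<psi>)) \<in> D"
      and "([({||}, atom_of M \<psi>)], atom_of M (Or \<phi> \<psi>)) \<in> D"
      using nd_base.OrI1 nd_base.OrI2 assms(1) C that(1) by blast+
    with \<phi> \<psi> C that show ?thesis by (auto simp: named_by_atom_def intro: derives_rule)
  qed
  ultimately show "derives C {} (atom_of M (Or \<phi> \<psi>))"
    unfolding atomic_elim_def by blast
next
  fix C assume C: "nd_base M \<subseteq> C" and d: "derives C {} (atom_of M (Or \<phi> \<psi>))"
  show "supp C (Or \<phi> \<psi>)"
    unfolding supp.simps
  proof (intro allI HOL.impI)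
    fix D p assume "C \<subseteq> D"
      and H\<phi>: "\<forall>E. D \<subseteq> E \<longrightarrow> supp E \<phi> \<longrightarrow> derives E {} p"
      and H\<psi>: "\<forall>E. D \<subseteq> E \<longrightarrow> supp E \<psi> \<longrightarrow> derives E {} p"
    have ND: "nd_base M \<subseteq> D" using C \<open>C \<subseteq> D\<close> by blast
    txt \<open>Add the name of a disjunct as an axiom, then discharge it as a hypothesis.\<close>
    have "derives D {atom_of M \<chi>} p"
      if \<chi>: "named_by_atom M \<chi>" and H: "\<forall>E. D \<subseteq> E \<longrightarrow> supp E \<chi> \<longrightarrow> derives E {} p" for \<chi>
    proof -
      have "derives (insert ([], atom_of M \<chi>) D) {} (atom_of M \<chi>)" by (simp add: derives_axiom)
      then have "supp (insert ([], atom_of M \<chi>) D) \<chi>"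
        using named_by_atomD[OF \<chi>] ND by blast
      then show ?thesis using H derives_discharge_axiom by blast
    qed
    then have "derives D {atom_of M \<phi>} p" and "derives D {atom_of M \<psi>} p"
      using \<phi> \<psi> H\<phi> H\<psi> by blast+
    moreover have "derives D {} (atom_of M (Or \<phi> \<psi>))" using derives_mono d \<open>C \<subseteq> D\<close> by blast
    moreover have "([({||}, atom_of M (Or \<phi> \<psi>)), ({|atom_of M \<phi>|}, p), ({|atom_of M \<psi>|}, p)], p) \<in> D"
      using nd_base.OrE assms(1) ND by blast
    ultimately show "derives D {} p" by (auto elim!: derives_rule)
  qed
qed

lemma named_by_atom_Imp:
  assumes "atoms (Imp \<phi> \<psi>) \<subseteq> {..<M}" and \<phi>: "named_by_atom M \<phi>" and \<psi>: "named_by_atom M \<psi>"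
  shows "named_by_atom M (Imp \<phi> \<psi>)"
  unfolding named_by_atom_def
proof (intro allI HOL.impI iffI)
  fix C assume C: "nd_base M \<subseteq> C" and s: "supp C (Imp \<phi> \<psi>)"
  define E where "E = insert ([], atom_of M \<phi>) C"
  have NE: "nd_base M \<subseteq> E" using C by (auto simp: E_def)
  have "derives E {} (atom_of M \<phi>)" unfolding E_def by (simp add: derives_axiom)
  then have "supp E \<phi>" using named_by_atomD[OF \<phi> NE] by blast
  then have "supp E \<psi>" using s by (auto simp: E_def)
  then have "derives E {} (atom_of M \<psi>)" using named_by_atomD[OF \<psi> NE] by blast
  then have "derives C {atom_of M \<phi>} (atom_of M \<psi>)" unfolding E_def by (rule derives_discharge_axiom)
  moreover have "([({|atom_of M \<phi>|}, atom_of M \<psi>)], atom_of M (Imp \<phi> \<psi>)) \<in> C"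
    using nd_base.ImpI assms(1) C by blast
  ultimately show "derives C {} (atom_of M (Imp \<phi> \<psi>))" by (auto elim!: derives_rule)
next
  fix C assume C: "nd_base M \<subseteq> C" and d: "derives C {} (atom_of M (Imp \<phi> \<psi>))"
  have "supp D \<psi>" if "C \<subseteq> D" and "supp D \<phi>" for D
  proof -
    have "derives D {} (atom_of M (Imp \<phi> \<psi>))" using derives_mono d that(1) by blast
    moreover have "derives D {} (atom_of M \<phi>)" using \<phi> C that by (auto simp: named_by_atom_def)
    moreover have "([({||}, atom_of M (Imp \<phi> \<psi>)), ({||}, atom_of M \<phi>)], atom_of M \<psi>) \<in> D"
      using nd_base.ImpE assms(1) C that(1) by blast
    ultimately have "derives D {} (atom_of M \<psi>)" by (auto elim!: derives_rule)
    then show ?thesis using \<psi> C that by (auto simp: named_by_atom_def)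
  qed
  then show "supp C (Imp \<phi> \<psi>)" by simp
qed

lemma named_by_atomI: "atoms \<phi> \<subseteq> {..<M} \<Longrightarrow> named_by_atom M \<phi>"
  by (induction \<phi>)
    (simp_all add: named_by_atom_Atom named_by_atom_Bot named_by_atom_And named_by_atom_Or
      named_by_atom_Imp)

lemma ipl_of_derives_nd_base:
  "derives (nd_base M) S p \<Longrightarrow> ipl (form_of M ` S) (form_of M p)"
proof (induction "nd_base M" S p rule: derives.induct)
  case (ref q S)
  then show ?case by (blast intro: ipl.ax)
next
  case (app prems q S)
  have IH: "ipl (form_of M ` (S \<union> fset Qi)) (form_of M qi)" if "(Qi, qi) \<in> set prems" for Qi qi
    using app.hyps(2) that by blast
  from app.hyps(1) show ?case
  proof cases
    case (AndI \<phi> \<psi>)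
    then show ?thesis using IH[of "{||}" "atom_of M \<phi>"] IH[of "{||}" "atom_of M \<psi>"]
      by (auto simp: form_of_atom_of intro: ipl.andI)
  next
    case (AndE1 \<phi> \<psi>)
    then show ?thesis using IH[of "{||}" "atom_of M (And \<phi> \<psi>)"]
      by (auto simp: form_of_atom_of intro: ipl.andE1)
  next
    case (AndE2 \<phi> \<psi>)
    then show ?thesis using IH[of "{||}" "atom_of M (And \<phi> \<psi>)"]
      by (auto simp: form_of_atom_of intro: ipl.andE2)
  next
    case (OrI1 \<phi> \<psi>)
    then show ?thesis using IH[of "{||}" "atom_of M \<phi>"]
      by (auto simp: form_of_atom_of intro: ipl.orI1)
  next
    case (OrI2 \<phi> \<psi>)
    then show ?thesis using IH[of "{||}" "atom_of M \<psi>"]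
      by (auto simp: form_of_atom_of intro: ipl.orI2)
  next
    case (OrE \<phi> \<psi>)
    then show ?thesis
      using IH[of "{||}" "atom_of M (Or \<phi> \<psi>)"] IH[of "{|atom_of M \<phi>|}" q] IH[of "{|atom_of M \<psi>|}" q]
      by (auto simp: form_of_atom_of intro: ipl.orE)
  next
    case (ImpI \<phi> \<psi>)
    then show ?thesis using IH[of "{|atom_of M \<phi>|}" "atom_of M \<psi>"]
      by (auto simp: form_of_atom_of intro: ipl.impI)
  next
    case (ImpE \<phi> \<psi>)
    then show ?thesis using IH[of "{||}" "atom_of M (Imp \<phi> \<psi>)"] IH[of "{||}" "atom_of M \<phi>"]
      by (auto simp: form_of_atom_of intro: ipl.impE)
  next
    case BotE
    then show ?thesis using IH[of "{||}" "atom_of M Bot"]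
      by (auto simp: form_of_atom_of intro: ipl.botE)
  qed
qed

lemma valid_if_ipl: "ipl \<Gamma> \<phi> \<Longrightarrow> valid \<Gamma> \<phi>"
  unfolding valid_iff_supp using ipl_sound by blast

lemma ipl_if_valid:
  assumes "finite \<Gamma>" and valid: "valid \<Gamma> \<phi>"
  shows "ipl \<Gamma> \<phi>"
proof -
  obtain M where M: "\<forall>\<chi>\<in>insert \<phi> \<Gamma>. atoms \<chi> \<subseteq> {..<M}"
    using finite_nat_set_iff_bounded[of "\<Union> (atoms ` insert \<phi> \<Gamma>)"] assms finite_atoms
    by (auto simp: subset_eq)
  define C where "C = nd_base M \<union> (\<lambda>q. ([], q)) ` atom_of M ` \<Gamma>"
  have named: "supp C \<chi> \<longleftrightarrow> derives C {} (atom_of M \<chi>)" if "\<chi> \<in> insert \<phi> \<Gamma>" for \<chi>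
    using named_by_atomD[OF named_by_atomI] M that by (auto simp: C_def)
  have "supp C \<psi>" if "\<psi> \<in> \<Gamma>" for \<psi>
    using named that by (auto simp: C_def intro: derives_axiom)
  then have "supp C \<phi>" using valid unfolding valid_iff_supp by blast
  then have "derives C {} (atom_of M \<phi>)" using named by blast
  then have "derives (nd_base M) (atom_of M ` \<Gamma>) (atom_of M \<phi>)"
    using derives_discharge_axioms[of C "{}"] by (auto simp: C_def)
  then have "ipl (form_of M ` atom_of M ` \<Gamma>) (form_of M (atom_of M \<phi>))"
    by (rule ipl_of_derives_nd_base)
  moreover have "form_of M ` atom_of M ` \<Gamma> = \<Gamma>"
    using M form_of_atom_of by (force simp: image_image)
  ultimately show "ipl \<Gamma> \<phi>" using M form_of_atom_of by auto
qed

theorem theorem2: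
  fixes \<Gamma> :: "form set" and \<phi> :: form
  assumes "finite \<Gamma>"
  shows "valid \<Gamma> \<phi> \<longleftrightarrow> ipl \<Gamma> \<phi>"
  using assms ipl_if_valid valid_if_ipl by blast

end
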